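(* Consider the unit-cost Correlated Pandora's Problem (all $c_i=1$). For any $k\le 4$ and any scenario $v$, the objective of $k$-Delayed Activation with Discrete-Time Poisson Rounding is at most $\alpha_{i^*}+(k+1)v_{i^*}$, where $i^*=\arg\min_{i\in[n]}\{\alpha_i+kv_i\}$.
   Context: Boxes $[n]$ with unit opening costs and volumes $v_i\ge 0$ (scenario $v$). Let $x_i(t)\ge 0$ ($i,t\in[n]$) satisfy $\sum_i x_i(t)\le 1$ for all $t$, and $\bar x_i(t)=\frac1t\sum_{t'=1}^{\min\{t,n\}}x_i(t')$. Discrete-Time Poisson Rounding: independently at each step $\tau=1,2,\dots$, sample box $i$ with probability $\bar x_i(\lceil\tau/2\rceil)$ (no box with the remaining probability); $\alpha_i$ is the first step at which box $i$ is sampled; all $\alpha_i$ are sampled in advance. $k$-Delayed Activation: open the boxes one per unit time step in ascending order of $\alpha_i$; stop after time step $\min_i(\alpha_i+\lfloor kv_i\rfloor)$ (or when all boxes are opened) and take the opened box of minimum volume; the objective is the number of boxes opened plus the taken volume. *)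

theory Defs
  imports Complex_Main
begin

text \<open>Boxes are 1..n. The LP solution is x i t (box i, time t), for i,t in 1..n.\<close>

definition xbar :: "nat \<Rightarrow> (nat \<Rightarrow> nat \<Rightarrow> real) \<Rightarrow> nat \<Rightarrow> nat \<Rightarrow> real" where
  "xbar n x i t = (1 / real t) * (\<Sum>t'=1..min t n. x i t')"

text \<open>A realization of Discrete-Time Poisson Rounding: s tau is the box sampled at step tau
  (None = no box). Only outcomes of positive probability are allowed at every step.\<close>
definition valid_path :: "nat \<Rightarrow> (nat \<Rightarrow> nat \<Rightarrow> real) \<Rightarrow> (nat \<Rightarrow> nat option) \<Rightarrow> bool" where
  "valid_path n x s \<longleftrightarrow>
     (\<forall>tau\<ge>1. (\<forall>i. s tau = Some i \<longrightarrow> i \<in> {1..n} \<and> xbar n x i ((tau + 1) div 2) > 0) \<and>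
              (s tau = None \<longrightarrow> (\<Sum>i=1..n. xbar n x i ((tau + 1) div 2)) < 1))"

definition sampled :: "(nat \<Rightarrow> nat option) \<Rightarrow> nat \<Rightarrow> bool" where
  "sampled s i \<longleftrightarrow> (\<exists>tau\<ge>1. s tau = Some i)"

text \<open>alpha i: first step at which box i is sampled (meaningful when sampled s i).\<close>
definition alpha :: "(nat \<Rightarrow> nat option) \<Rightarrow> nat \<Rightarrow> nat" where
  "alpha s i = (LEAST tau. tau \<ge> 1 \<and> s tau = Some i)"

definition sampled_boxes :: "nat \<Rightarrow> (nat \<Rightarrow> nat option) \<Rightarrow> nat set" where
  "sampled_boxes n s = {i \<in> {1..n}. sampled s i}"

definition stop_time :: "nat \<Rightarrow> real \<Rightarrow> (nat \<Rightarrow> real) \<Rightarrow> (nat \<Rightarrow> nat option) \<Rightarrow> nat" where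
  "stop_time n k v s = Min ((\<lambda>i. alpha s i + nat \<lfloor>k * v i\<rfloor>) ` sampled_boxes n s)"

text \<open>Boxes opened: one per time step in ascending order of alpha, through the stopping time
  (or until all boxes are opened).\<close>
definition opened :: "nat \<Rightarrow> real \<Rightarrow> (nat \<Rightarrow> real) \<Rightarrow> (nat \<Rightarrow> nat option) \<Rightarrow> nat set" where
  "opened n k v s = {i \<in> sampled_boxes n s.
      card {j \<in> sampled_boxes n s. alpha s j \<le> alpha s i} \<le> stop_time n k v s}"

definition objective :: "nat \<Rightarrow> real \<Rightarrow> (nat \<Rightarrow> real) \<Rightarrow> (nat \<Rightarrow> nat option) \<Rightarrow> real" where
  "objective n k v s = real (card (opened n k v s)) + Min (v ` opened n k v s)"

end

theory Submission
  imports Defs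
begin

text \<open>The stopping time T is at most \<open>\<alpha>\<^sub>i\<^sub>* + \<lfloor>k v\<^sub>i\<^sub>*\<rfloor>\<close>, and at most T boxes are
  opened. Conversely, by the minimality of \<open>i*\<close> every \<open>\<alpha>\<^sub>j + \<lfloor>k v\<^sub>j\<rfloor>\<close> is at least
  \<open>\<alpha>\<^sub>i\<^sub>*\<close>, so \<open>T \<ge> \<alpha>\<^sub>i\<^sub>*\<close>; and since distinct boxes are first sampled at distinct steps
  \<open>\<ge> 1\<close>, the box \<open>i*\<close> has rank at most \<open>\<alpha>\<^sub>i\<^sub>*\<close> in the opening order. Hence \<open>i*\<close> is
  opened and the volume taken is at most \<open>v\<^sub>i\<^sub>*\<close>. The argument works for every \<open>k \<ge> 0\<close>
  and every realization of the sampling.\<close>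

lemma card_rank_le:
  fixes f :: "'a \<Rightarrow> 'b::linorder"
  assumes "finite S"
  shows "card {i \<in> S. card {j \<in> S. f j \<le> f i} \<le> T} \<le> T"
proof -
  define B where "B = {i \<in> S. card {j \<in> S. f j \<le> f i} \<le> T}"
  have "finite B" using assms by (simp add: B_def)
  have "card B \<le> T"
  proof (cases "B = {}")
    case False
    with \<open>finite B\<close> have "Max (f ` B) \<in> f ` B" by (intro Max_in) auto
    then obtain m where m: "m \<in> B" "f m = Max (f ` B)" by (metis imageE)
    have "B \<subseteq> {j \<in> S. f j \<le> f m}"
      using \<open>finite B\<close> m(2) by (auto simp: B_def)
    then have "card B \<le> card {j \<in> S. f j \<le> f m}"
      using assms by (intro card_mono) auto
    also have "\<dots> \<le> T" using m(1) by (simp add: B_def)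
    finally show ?thesis .
  qed simp
  then show ?thesis by (simp add: B_def)
qed

lemma alpha_sampled:
  assumes "sampled s i"
  shows "1 \<le> alpha s i" and "s (alpha s i) = Some i"
proof -
  from assms obtain tau where "1 \<le> tau \<and> s tau = Some i" unfolding sampled_def by blast
  then have "1 \<le> alpha s i \<and> s (alpha s i) = Some i" unfolding alpha_def by (rule LeastI)
  then show "1 \<le> alpha s i" and "s (alpha s i) = Some i" by simp_all
qed

lemma inj_on_alpha:
  assumes "\<And>i. i \<in> A \<Longrightarrow> sampled s i"
  shows "inj_on (alpha s) A"
  by (rule inj_onI) (metis assms alpha_sampled(2) option.inject)

lemma card_alpha_le:
  assumes "\<And>i. i \<in> A \<Longrightarrow> sampled s i"
  shows "card {j \<in> A. alpha s j \<le> t} \<le> t"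
proof -
  have "inj_on (alpha s) {j \<in> A. alpha s j \<le> t}"
    by (rule inj_on_alpha) (simp add: assms)
  moreover have "alpha s ` {j \<in> A. alpha s j \<le> t} \<subseteq> {1..t}"
    using assms alpha_sampled(1) by fastforce
  ultimately have "card {j \<in> A. alpha s j \<le> t} \<le> card {1..t}"
    by (intro card_inj_on_le) auto
  then show ?thesis by simp
qed

lemma finite_sampled_boxes: "finite (sampled_boxes n s)"
  by (simp add: sampled_boxes_def)

lemma stop_time_le:
  assumes "i \<in> sampled_boxes n s"
  shows "stop_time n k v s \<le> alpha s i + nat \<lfloor>k * v i\<rfloor>"
  unfolding stop_time_def using assms finite_sampled_boxes by (intro Min_le) auto

lemma alpha_le_stop_time:
  assumes i: "i \<in> sampled_boxes n s" and kv_nonneg: "0 \<le> k * v i"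
    and i_min: "\<And>j. j \<in> sampled_boxes n s \<Longrightarrow>
                  real (alpha s i) + k * v i \<le> real (alpha s j) + k * v j"
  shows "alpha s i \<le> stop_time n k v s"
proof -
  have "alpha s i \<le> alpha s j + nat \<lfloor>k * v j\<rfloor>" if "j \<in> sampled_boxes n s" for j
  proof -
    have "real (alpha s i) \<le> real (alpha s j) + k * v j"
      using i_min[OF that] kv_nonneg by linarith
    moreover have "k * v j < real (nat \<lfloor>k * v j\<rfloor>) + 1" by linarith
    ultimately show ?thesis by linarith
  qed
  then show ?thesis
    unfolding stop_time_def using i finite_sampled_boxes by (subst Min_ge_iff) auto
qed

lemma card_opened_le_stop_time: "card (opened n k v s) \<le> stop_time n k v s"
  unfolding opened_def by (rule card_rank_le[OF finite_sampled_boxes])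

lemma opened_if_alpha_le_stop_time:
  assumes "i \<in> sampled_boxes n s" and "alpha s i \<le> stop_time n k v s"
  shows "i \<in> opened n k v s"
proof -
  have "card {j \<in> sampled_boxes n s. alpha s j \<le> alpha s i} \<le> alpha s i"
    by (rule card_alpha_le) (simp add: sampled_boxes_def)
  with assms show ?thesis unfolding opened_def by auto
qed

theorem lemmaA2:
  fixes n :: nat and x :: "nat \<Rightarrow> nat \<Rightarrow> real" and v :: "nat \<Rightarrow> real"
    and k :: real and s :: "nat \<Rightarrow> nat option" and istar :: nat
  assumes x_nonneg: "\<And>i t. i \<in> {1..n} \<Longrightarrow> t \<in> {1..n} \<Longrightarrow> x i t \<ge> 0"
    and x_sum: "\<And>t. t \<in> {1..n} \<Longrightarrow> (\<Sum>i=1..n. x i t) \<le> 1"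
    and v_nonneg: "\<And>i. i \<in> {1..n} \<Longrightarrow> v i \<ge> 0"
    and k_nonneg: "0 \<le> k" and k_le: "k \<le> 4"
    and path: "valid_path n x s"
    and some_sampled: "sampled_boxes n s \<noteq> {}"
    and istar: "istar \<in> sampled_boxes n s"
    and istar_min: "\<And>j. j \<in> sampled_boxes n s \<Longrightarrow>
                      real (alpha s istar) + k * v istar \<le> real (alpha s j) + k * v j"
  shows "objective n k v s \<le> real (alpha s istar) + (k + 1) * v istar"
proof -
  have kv_nonneg: "0 \<le> k * v istar"
    using istar v_nonneg k_nonneg by (simp add: sampled_boxes_def)
  have "istar \<in> opened n k v s"
    using istar alpha_le_stop_time[OF istar kv_nonneg istar_min]
    by (rule opened_if_alpha_le_stop_time)
  then have taken: "Min (v ` opened n k v s) \<le> v istar"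
    by (intro Min_le) (auto simp: opened_def finite_sampled_boxes)
  have "card (opened n k v s) \<le> alpha s istar + nat \<lfloor>k * v istar\<rfloor>"
    using card_opened_le_stop_time stop_time_le[OF istar] by (rule le_trans)
  moreover have "real (nat \<lfloor>k * v istar\<rfloor>) \<le> k * v istar"
    using kv_nonneg by simp
  ultimately have "real (card (opened n k v s)) \<le> real (alpha s istar) + k * v istar"
    by linarith
  with taken show ?thesis
    unfolding objective_def by (simp add: algebra_simps)
qed

end
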